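(* For every real Banach space $X$ with $\dim X\ge 2$ and all $\alpha,\beta>0$, $$DW(X,\alpha,\beta)\ge(\alpha+\beta)\max\{\varepsilon_0(X),1\}.$$
   Context: For $\alpha,\beta>0$, $$DW(X,\alpha,\beta)=\sup\left\{\frac{\alpha\|x\|+\beta\|y\|}{\|x-y\|}\left\|\frac{x}{\|x\|}-\frac{y}{\|y\|}\right\|: x,y\in X\setminus\{0\},\ x\neq y\right\}.$$ The modulus of convexity is $\delta_X(\varepsilon)=\inf\{1-\|\tfrac12(x+y)\|: x,y\in S_X,\ \|x-y\|\ge\varepsilon\}$ for $\varepsilon\in[0,2]$, where $S_X$ is the unit sphere, and the characteristic of convexity is $\varepsilon_0(X)=\sup\{\varepsilon\in[0,2]:\delta_X(\varepsilon)=0\}$. *)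

theory Defs
  imports "HOL-Analysis.Analysis"
begin

definition DW :: "'a::real_normed_vector itself \<Rightarrow> real \<Rightarrow> real \<Rightarrow> real" where
  "DW X \<alpha> \<beta> = Sup {(\<alpha> * norm x + \<beta> * norm y) / norm (x - y) *
       norm (x /\<^sub>R norm x - y /\<^sub>R norm y) | x y :: 'a. x \<noteq> 0 \<and> y \<noteq> 0 \<and> x \<noteq> y}"

definition modulus_convexity :: "'a::real_normed_vector itself \<Rightarrow> real \<Rightarrow> real" where
  "modulus_convexity X \<epsilon> = Inf {1 - norm ((1/2) *\<^sub>R (x + y)) | x y :: 'a.
       norm x = 1 \<and> norm y = 1 \<and> norm (x - y) \<ge> \<epsilon>}"

definition char_convexity :: "'a::real_normed_vector itself \<Rightarrow> real" where
  "char_convexity X = Sup {\<epsilon>. 0 \<le> \<epsilon> \<and> \<epsilon> \<le> 2 \<and> modulus_convexity X \<epsilon> = 0}"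

end

theory Submission
  imports Defs
begin

text \<open>
  The value \<alpha> + \<beta> is attained at the antipodal pair x, -x.
  For \<epsilon> with \<delta>(\<epsilon>) = 0 pick unit vectors x, y with \<parallel>x - y\<parallel> \<ge> \<epsilon> whose midpoint has norm
  almost 1, so the whole chord [x, y] runs almost along the unit sphere. The nearby pair
  u = (1 - t) x + t y, v = (1 - t) x then has \<parallel>u - v\<parallel> = t, both norms close to 1, and
  normalisations about t \<epsilon> apart, so its quotient is about (\<alpha> + \<beta>) \<epsilon>; letting t \<rightarrow> 0
  gives DW \<ge> (\<alpha> + \<beta>) \<epsilon> and hence DW \<ge> (\<alpha> + \<beta>) \<epsilon>_0.
\<close>

abbreviation dw_quotient :: "real \<Rightarrow> real \<Rightarrow> 'a::real_normed_vector \<Rightarrow> 'a \<Rightarrow> real" where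
  "dw_quotient \<alpha> \<beta> x y \<equiv>
     (\<alpha> * norm x + \<beta> * norm y) / norm (x - y) * norm (x /\<^sub>R norm x - y /\<^sub>R norm y)"

lemma norm_sub_normalize:
  fixes u :: "'a::real_normed_vector"
  assumes "u \<noteq> 0"
  shows "norm (u - u /\<^sub>R norm u) = \<bar>norm u - 1\<bar>"
proof -
  have "u - u /\<^sub>R norm u = (1 - 1 / norm u) *\<^sub>R u"
    by (simp add: algebra_simps divide_inverse)
  also have "norm \<dots> = \<bar>(1 - 1 / norm u) * norm u\<bar>"
    by (simp add: abs_mult)
  also have "(1 - 1 / norm u) * norm u = norm u - 1"
    using assms by (simp add: field_simps)
  finally show ?thesis .
qed

lemma norm_mult_norm_normalize_diff_le:
  fixes x y :: "'a::real_normed_vector"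
  assumes "x \<noteq> 0" "y \<noteq> 0"
  shows "norm x * norm (x /\<^sub>R norm x - y /\<^sub>R norm y) \<le> 2 * norm (x - y)"
proof -
  have "norm x * norm (x /\<^sub>R norm x - y /\<^sub>R norm y) = norm (norm x *\<^sub>R (x /\<^sub>R norm x - y /\<^sub>R norm y))"
    by simp
  also have "norm x *\<^sub>R (x /\<^sub>R norm x - y /\<^sub>R norm y) = (x - y) + (1 - norm x / norm y) *\<^sub>R y"
    using assms by (simp add: algebra_simps divide_inverse)
  also have "norm \<dots> \<le> norm (x - y) + norm ((1 - norm x / norm y) *\<^sub>R y)"
    by (rule norm_triangle_ineq)
  also have "norm ((1 - norm x / norm y) *\<^sub>R y) = \<bar>(1 - norm x / norm y) * norm y\<bar>"
    by (simp add: abs_mult)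
  also have "(1 - norm x / norm y) * norm y = norm y - norm x"
    using assms by (simp add: field_simps)
  also have "\<bar>norm y - norm x\<bar> \<le> norm (x - y)"
    using norm_triangle_ineq3[of y x] by (simp add: norm_minus_commute)
  finally show ?thesis by simp
qed

lemma dw_quotient_le:
  fixes x y :: "'a::real_normed_vector"
  assumes "x \<noteq> 0" "y \<noteq> 0" "x \<noteq> y" "\<alpha> \<ge> 0" "\<beta> \<ge> 0"
  shows "dw_quotient \<alpha> \<beta> x y \<le> 2 * (\<alpha> + \<beta>)"
proof -
  let ?N = "norm (x /\<^sub>R norm x - y /\<^sub>R norm y)"
  have "norm x * ?N \<le> 2 * norm (x - y)"
    using norm_mult_norm_normalize_diff_le assms by blast
  moreover have "norm y * ?N \<le> 2 * norm (x - y)"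
    using norm_mult_norm_normalize_diff_le[of y x] assms by (simp add: norm_minus_commute)
  ultimately have "\<alpha> * (norm x * ?N) + \<beta> * (norm y * ?N) \<le> \<alpha> * (2 * norm (x - y)) + \<beta> * (2 * norm (x - y))"
    using assms by (intro add_mono mult_left_mono) auto
  moreover have "norm (x - y) > 0"
    using assms by simp
  ultimately show ?thesis
    by (simp add: field_simps)
qed

lemma dw_quotient_le_DW:
  fixes x y :: "'a::real_normed_vector"
  assumes "x \<noteq> 0" "y \<noteq> 0" "x \<noteq> y" "\<alpha> \<ge> 0" "\<beta> \<ge> 0"
  shows "dw_quotient \<alpha> \<beta> x y \<le> DW TYPE('a) \<alpha> \<beta>"
  unfolding DW_def
proof (rule cSup_upper)
  show "dw_quotient \<alpha> \<beta> x y \<in> {dw_quotient \<alpha> \<beta> x y | x y :: 'a. x \<noteq> 0 \<and> y \<noteq> 0 \<and> x \<noteq> y}"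
    using assms by blast
  show "bdd_above {dw_quotient \<alpha> \<beta> x y | x y :: 'a. x \<noteq> 0 \<and> y \<noteq> 0 \<and> x \<noteq> y}"
    unfolding bdd_above_def using dw_quotient_le assms(4,5) by blast
qed

lemma DW_ge_sum:
  fixes e :: "'a::real_normed_vector"
  assumes "e \<noteq> 0" "\<alpha> \<ge> 0" "\<beta> \<ge> 0"
  shows "\<alpha> + \<beta> \<le> DW TYPE('a) \<alpha> \<beta>"
proof -
  have "e \<noteq> - e"
    using assms(1) by (metis scaleR_2 scaleR_eq_0_iff zero_neq_numeral add_eq_0_iff2)
  then have "dw_quotient \<alpha> \<beta> e (- e) \<le> DW TYPE('a) \<alpha> \<beta>"
    using dw_quotient_le_DW assms by (metis neg_equal_0_iff_equal)
  moreover have "dw_quotient \<alpha> \<beta> e (- e) = \<alpha> + \<beta>"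
    using assms(1) by (simp add: scaleR_2[symmetric] field_simps)
  ultimately show ?thesis by simp
qed

lemma norm_chord_point_ge:
  fixes x y :: "'a::real_normed_vector"
  assumes "norm x = 1" "norm y = 1"
    and flat: "1 - norm ((1/2) *\<^sub>R (x + y)) < t\<^sup>2"
    and "0 < t" "t \<le> 1/2"
  shows "1 - 2 * t\<^sup>2 \<le> norm ((1 - t) *\<^sub>R x + t *\<^sub>R y)"
proof -
  let ?u = "(1 - t) *\<^sub>R x + t *\<^sub>R y" and ?m = "(1/2) *\<^sub>R (x + y)"
  have midpoint: "(2 * (1 - t)) *\<^sub>R ?m = ?u + (1 - 2 * t) *\<^sub>R y"
    by (simp add: algebra_simps scaleR_2[symmetric])
  have "2 * (1 - t) * norm ?m = norm ((2 * (1 - t)) *\<^sub>R ?m)"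
    using assms by simp
  also have "\<dots> = norm (?u + (1 - 2 * t) *\<^sub>R y)"
    by (simp only: midpoint)
  also have "\<dots> \<le> norm ?u + (1 - 2 * t)"
    using norm_triangle_ineq[of ?u "(1 - 2 * t) *\<^sub>R y"] assms by simp
  finally have "2 * (1 - t) * norm ?m \<le> norm ?u + (1 - 2 * t)" .
  moreover have "2 * (1 - t) * (1 - t\<^sup>2) \<le> 2 * (1 - t) * norm ?m"
    using flat assms by (intro mult_left_mono) auto
  moreover have "2 * (1 - t) * (1 - t\<^sup>2) = 1 - 2 * t + (1 - 2 * t\<^sup>2 + 2 * t ^ 3)"
    by (simp add: algebra_simps power2_eq_square power3_eq_cube)
  moreover have "0 \<le> t ^ 3"
    using \<open>0 < t\<close> by simp
  ultimately show ?thesis by linarith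
qed

lemma norm_normalize_chord_point_sub_ge:
  fixes x y :: "'a::real_normed_vector"
  assumes x: "norm x = 1" and y: "norm y = 1"
    and flat: "1 - norm ((1/2) *\<^sub>R (x + y)) < t\<^sup>2"
    and t: "0 < t" "t \<le> 1/2"
  defines "u \<equiv> (1 - t) *\<^sub>R x + t *\<^sub>R y"
  shows "t * norm (x - y) - 2 * t\<^sup>2 \<le> norm (u /\<^sub>R norm u - x)"
proof -
  have nu_lo: "1 - 2 * t\<^sup>2 \<le> norm u"
    unfolding u_def using norm_chord_point_ge[OF x y flat t] .
  have nu_hi: "norm u \<le> 1"
    unfolding u_def using norm_triangle_ineq[of "(1 - t) *\<^sub>R x" "t *\<^sub>R y"] x y t by simp
  have "t\<^sup>2 \<le> t / 2"
    using t by (simp add: power2_eq_square mult_right_mono)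
  then have "u \<noteq> 0"
    using nu_lo t by auto
  have "t * norm (x - y) = norm (u - x)"
    using t by (simp add: u_def algebra_simps norm_minus_commute flip: scaleR_diff_right)
  also have "\<dots> \<le> norm (u /\<^sub>R norm u - x) + norm (u - u /\<^sub>R norm u)"
    using norm_triangle_ineq[of "u /\<^sub>R norm u - x" "u - u /\<^sub>R norm u"] by simp
  also have "norm (u - u /\<^sub>R norm u) = 1 - norm u"
    using norm_sub_normalize[OF \<open>u \<noteq> 0\<close>] nu_hi by simp
  finally show ?thesis
    using nu_lo by linarith
qed

lemma DW_ge_of_flat_pair:
  fixes x y :: "'a::real_normed_vector"
  assumes x: "norm x = 1" and y: "norm y = 1" and dist: "\<epsilon> \<le> norm (x - y)"
    and flat: "1 - norm ((1/2) *\<^sub>R (x + y)) < t\<^sup>2"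
    and t: "0 < t" "t \<le> 1/2" and "\<alpha> \<ge> 0" "\<beta> \<ge> 0" "\<epsilon> \<le> 2"
  shows "(\<alpha> + \<beta>) * (\<epsilon> - 6 * t) \<le> DW TYPE('a) \<alpha> \<beta>"
proof -
  define u where "u = (1 - t) *\<^sub>R x + t *\<^sub>R y"
  define v where "v = (1 - t) *\<^sub>R x"
  have nu_lo: "1 - 2 * t\<^sup>2 \<le> norm u"
    unfolding u_def using norm_chord_point_ge[OF x y flat t] .
  have "t\<^sup>2 \<le> t / 2"
    using t by (simp add: power2_eq_square mult_right_mono)
  then have nu: "1 - 2 * t \<le> norm u" "u \<noteq> 0"
    using nu_lo t by auto
  have nv: "norm v = 1 - t" and vx: "v /\<^sub>R norm v = x"
    using x t by (simp_all add: v_def)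
  have nuv: "norm (u - v) = t"
    using y t by (simp add: u_def v_def)
  let ?N = "norm (u /\<^sub>R norm u - v /\<^sub>R norm v)"
  have "t * \<epsilon> \<le> t * norm (x - y)"
    using dist t by simp
  then have "t * \<epsilon> - 2 * t\<^sup>2 \<le> ?N"
    using norm_normalize_chord_point_sub_ge[OF x y flat t] unfolding vx u_def by linarith
  then have N: "\<epsilon> - 2 * t \<le> ?N / t"
    using t by (simp add: field_simps power2_eq_square)
  have "1 - 2 * t \<le> norm v"
    using nv t by simp
  then have weights: "(\<alpha> + \<beta>) * (1 - 2 * t) \<le> \<alpha> * norm u + \<beta> * norm v"
    using mult_left_mono[OF nu(1), of \<alpha>] mult_left_mono[of "1 - 2 * t" "norm v" \<beta>] assms
    by (simp add: algebra_simps)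
  have quotient: "dw_quotient \<alpha> \<beta> u v = (\<alpha> * norm u + \<beta> * norm v) * (?N / t)"
    using nuv by simp
  have DW: "dw_quotient \<alpha> \<beta> u v \<le> DW TYPE('a) \<alpha> \<beta>"
  proof (rule dw_quotient_le_DW)
    show "v \<noteq> 0" "u \<noteq> v"
      using nv nuv t by auto
  qed (use nu assms in auto)
  show ?thesis
  proof (cases "\<epsilon> \<le> 2 * t")
    case True
    then have "(\<alpha> + \<beta>) * (\<epsilon> - 6 * t) \<le> 0"
      using t assms by (simp add: mult_nonneg_nonpos)
    also have "0 \<le> dw_quotient \<alpha> \<beta> u v"
      using assms by simp
    finally show ?thesis using DW by linarith
  next
    case False
    have "t * \<epsilon> \<le> t * 2" "0 \<le> t * t"
      using \<open>\<epsilon> \<le> 2\<close> t by simp_all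
    moreover have "(1 - 2 * t) * (\<epsilon> - 2 * t) = \<epsilon> - 2 * t - 2 * (t * \<epsilon>) + 4 * (t * t)"
      by (simp add: algebra_simps)
    ultimately have "\<epsilon> - 6 * t \<le> (1 - 2 * t) * (\<epsilon> - 2 * t)"
      by linarith
    then have "(\<alpha> + \<beta>) * (\<epsilon> - 6 * t) \<le> (\<alpha> + \<beta>) * (1 - 2 * t) * (\<epsilon> - 2 * t)"
      using assms by (simp add: mult_left_mono mult.assoc)
    also have "\<dots> \<le> dw_quotient \<alpha> \<beta> u v"
      unfolding quotient using weights N False assms t by (intro mult_mono) auto
    finally show ?thesis using DW by linarith
  qed
qed

lemma DW_ge_of_modulus_convexity_eq_0:
  fixes x0 :: "'a::real_normed_vector"
  assumes x0: "norm x0 = 1" and \<delta>: "modulus_convexity TYPE('a) \<epsilon> = 0"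
    and "\<epsilon> \<le> 2" and "\<alpha> > 0" and "\<beta> > 0"
  shows "(\<alpha> + \<beta>) * \<epsilon> \<le> DW TYPE('a) \<alpha> \<beta>"
proof (rule field_le_epsilon)
  fix \<gamma> :: real
  assume "0 < \<gamma>"
  define t where "t = min (1/2) (\<gamma> / (6 * (\<alpha> + \<beta>)))"
  have t: "0 < t" "t \<le> 1/2"
    using \<open>0 < \<gamma>\<close> assms min.cobounded1[of "1/2" "\<gamma> / (6 * (\<alpha> + \<beta>))"]
    by (simp_all add: t_def)
  have "t \<le> \<gamma> / (6 * (\<alpha> + \<beta>))"
    by (simp add: t_def)
  then have "6 * (\<alpha> + \<beta>) * t \<le> \<gamma>"
    using assms by (simp add: field_simps)
  let ?S = "{1 - norm ((1/2) *\<^sub>R (x + y)) | x y :: 'a. norm x = 1 \<and> norm y = 1 \<and> norm (x - y) \<ge> \<epsilon>}"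
  have "norm (x0 - - x0) = 2"
    using x0 by (simp add: scaleR_2[symmetric])
  then have "1 - norm ((1/2) *\<^sub>R (x0 + - x0)) \<in> ?S"
    using x0 \<open>\<epsilon> \<le> 2\<close> by (intro CollectI exI[of _ x0] exI[of _ "- x0"]) auto
  then have nonempty: "?S \<noteq> {}"
    by blast
  have "Inf ?S < t\<^sup>2"
    using \<delta> t(1) unfolding modulus_convexity_def by simp
  then obtain z where "z \<in> ?S" "z < t\<^sup>2"
    using cInf_lessD[OF nonempty] by blast
  then obtain x y :: 'a where xy: "norm x = 1" "norm y = 1" "\<epsilon> \<le> norm (x - y)"
    "1 - norm ((1/2) *\<^sub>R (x + y)) < t\<^sup>2"
    by blast
  have "(\<alpha> + \<beta>) * (\<epsilon> - 6 * t) \<le> DW TYPE('a) \<alpha> \<beta>"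
    using DW_ge_of_flat_pair[OF xy t] assms by simp
  with \<open>6 * (\<alpha> + \<beta>) * t \<le> \<gamma>\<close> show "(\<alpha> + \<beta>) * \<epsilon> \<le> DW TYPE('a) \<alpha> \<beta> + \<gamma>"
    by (simp add: algebra_simps)
qed

lemma modulus_convexity_0:
  fixes x0 :: "'a::real_normed_vector"
  assumes "norm x0 = 1"
  shows "modulus_convexity TYPE('a) 0 = 0"
  unfolding modulus_convexity_def
proof (rule cInf_eq_minimum)
  show "0 \<in> {1 - norm ((1/2) *\<^sub>R (x + y)) | x y :: 'a. norm x = 1 \<and> norm y = 1 \<and> norm (x - y) \<ge> 0}"
    using assms by (intro CollectI exI[of _ x0]) (simp add: scaleR_2[symmetric])
next
  fix z
  assume "z \<in> {1 - norm ((1/2) *\<^sub>R (x + y)) | x y :: 'a. norm x = 1 \<and> norm y = 1 \<and> norm (x - y) \<ge> 0}"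
  then obtain x y :: 'a where "norm x = 1" "norm y = 1" "z = 1 - norm ((1/2) *\<^sub>R (x + y))"
    by blast
  then show "0 \<le> z"
    using norm_triangle_ineq[of x y] by simp
qed

lemma char_convexity_le_DW:
  fixes x0 :: "'a::real_normed_vector"
  assumes x0: "norm x0 = 1" and "\<alpha> > 0" and "\<beta> > 0"
  shows "(\<alpha> + \<beta>) * char_convexity TYPE('a) \<le> DW TYPE('a) \<alpha> \<beta>"
proof -
  let ?E = "{\<epsilon>. 0 \<le> \<epsilon> \<and> \<epsilon> \<le> 2 \<and> modulus_convexity TYPE('a) \<epsilon> = 0}"
  have "0 \<in> ?E"
    using modulus_convexity_0[OF x0] by simp
  have "char_convexity TYPE('a) \<le> DW TYPE('a) \<alpha> \<beta> / (\<alpha> + \<beta>)"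
    unfolding char_convexity_def
  proof (rule cSup_least)
    show "?E \<noteq> {}"
      using \<open>0 \<in> ?E\<close> by blast
  next
    fix \<epsilon>
    assume "\<epsilon> \<in> ?E"
    then have "(\<alpha> + \<beta>) * \<epsilon> \<le> DW TYPE('a) \<alpha> \<beta>"
      using DW_ge_of_modulus_convexity_eq_0[OF x0] assms by simp
    then show "\<epsilon> \<le> DW TYPE('a) \<alpha> \<beta> / (\<alpha> + \<beta>)"
      using assms by (simp add: field_simps)
  qed
  then show ?thesis
    using assms by (simp add: field_simps)
qed

theorem theorem1:
  fixes \<alpha> \<beta> :: real
  assumes dim2: "\<exists>u v :: 'a::banach. \<forall>a b :: real. a *\<^sub>R u + b *\<^sub>R v = 0 \<longrightarrow> a = 0 \<and> b = 0"
    and "\<alpha> > 0" and "\<beta> > 0"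
  shows "DW TYPE('a) \<alpha> \<beta> \<ge> (\<alpha> + \<beta>) * max (char_convexity TYPE('a)) 1"
proof -
  \<comment> \<open>only a nonzero vector is needed from the dimension hypothesis\<close>
  obtain u :: 'a where "u \<noteq> 0"
    using dim2 by (metis scaleR_one scaleR_zero_left add_0 zero_neq_one)
  then have "norm (u /\<^sub>R norm u) = 1"
    by simp
  then have "(\<alpha> + \<beta>) * char_convexity TYPE('a) \<le> DW TYPE('a) \<alpha> \<beta>"
    using char_convexity_le_DW assms by blast
  moreover have "\<alpha> + \<beta> \<le> DW TYPE('a) \<alpha> \<beta>"
    using DW_ge_sum[OF \<open>u \<noteq> 0\<close>] assms by simp
  ultimately show ?thesis
    by (simp add: max_def)
qed

end
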